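(* Identify $\mathbb{C}^4$ with $\mathbb{R}^8$. Let $\omega=e^{2\pi i/3}$, $\mathcal{E}=\mathbb{Z}[\omega]$, and $\theta=\omega-\bar\omega$. For a finite set $S\subset\mathbb{C}^4$ let $\langle S\rangle_{\mathcal E}$ denote the set of $\mathcal{E}$-linear combinations of elements of $S$. Define six sets of four vectors: $S_1=\{(\theta,0,0,0),(0,\theta,0,0),(0,0,\theta,0),(0,0,0,\theta)\}$; $S_2=\{(0,1,-1,1),(1,0,-1,-1),(1,-1,0,1),(1,1,1,0)\}$; $S_3=\{(0,1,-1,\omega),(1,0,-\omega,-\bar\omega),(1,-\omega,0,\bar\omega),(1,\omega,\omega,0)\}$; $S_4=\{(0,1,-\omega,\omega),(1,0,-\omega,-\omega),(1,-1,0,\omega),(1,1,\omega,0)\}$; $S_5=\{(0,1,-\omega,\bar\omega),(1,0,-\bar\omega,-1),(1,-\omega,0,1),(1,\omega,\bar\omega,0)\}$; $S_6=\{(0,1,-\omega,1),(1,0,-1,-\bar\omega),(1,-\bar\omega,0,\bar\omega),(1,\bar\omega,1,0)\}$; and for $j=3,4,5,6$ let $S_{j+4}=\overline{S_j}$ be obtained by complex-conjugating every coordinate. Let $\Lambda_k=\langle S_k\rangle_{\mathcal E}$ for $k=1,\dots,10$ (each a copy of $\mathcal{E}^4\cong A_2^4$). Then $$\Lambda_1\cap\cdots\cap\Lambda_{10}=\Lambda_1\cap\Lambda_2=\langle \theta(\theta,0,0,0),\ \theta(0,\theta,0,0),\ \theta(1,1,1,0),\ \theta(0,1,-1,1)\rangle_{\mathcal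 E},$$ and this lattice is a copy of the $E_8$ lattice.
   Context: $\mathcal{E}=\{a+b\omega:a,b\in\mathbb{Z}\}$ is the ring of Eisenstein integers; regarded as a real 2-dimensional lattice it is similar to the hexagonal lattice $A_2$. $E_8$ is the 8-dimensional root lattice (up to similarity). *)

theory Defs
  imports "HOL-Analysis.Analysis"
begin

definition omega :: complex where
  "omega = cis (2 * pi / 3)"

definition theta :: complex where
  "theta = omega - cnj omega"

definition eisenstein :: "complex set" where
  "eisenstein = {of_int a + of_int b * omega | a b. True}"

definition espan :: "(complex ^ 4) list \<Rightarrow> (complex ^ 4) set" where
  "espan S = {x. \<exists>c :: nat \<Rightarrow> complex. (\<forall>i<length S. c i \<in> eisenstein) \<and>
                 x = (\<Sum>i<length S. c i *s (S ! i))}"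

definition vconj :: "complex ^ 4 \<Rightarrow> complex ^ 4" where
  "vconj v = (\<chi> i. cnj (v $ i))"

definition S1 :: "(complex ^ 4) list" where
  "S1 = [vector [theta,0,0,0], vector [0,theta,0,0], vector [0,0,theta,0], vector [0,0,0,theta]]"
definition S2 :: "(complex ^ 4) list" where
  "S2 = [vector [0,1,-1,1], vector [1,0,-1,-1], vector [1,-1,0,1], vector [1,1,1,0]]"
definition S3 :: "(complex ^ 4) list" where
  "S3 = [vector [0,1,-1,omega], vector [1,0,-omega,-cnj omega], vector [1,-omega,0,cnj omega],
         vector [1,omega,omega,0]]"
definition S4 :: "(complex ^ 4) list" where
  "S4 = [vector [0,1,-omega,omega], vector [1,0,-omega,-omega], vector [1,-1,0,omega],
         vector [1,1,omega,0]]"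
definition S5 :: "(complex ^ 4) list" where
  "S5 = [vector [0,1,-omega,cnj omega], vector [1,0,-cnj omega,-1], vector [1,-omega,0,1],
         vector [1,omega,cnj omega,0]]"
definition S6 :: "(complex ^ 4) list" where
  "S6 = [vector [0,1,-omega,1], vector [1,0,-1,-cnj omega], vector [1,-cnj omega,0,cnj omega],
         vector [1,cnj omega,1,0]]"

definition Sset :: "nat \<Rightarrow> (complex ^ 4) list" where
  "Sset k = (if k = 1 then S1 else if k = 2 then S2 else if k = 3 then S3
             else if k = 4 then S4 else if k = 5 then S5 else if k = 6 then S6
             else if k = 7 then map vconj S3 else if k = 8 then map vconj S4
             else if k = 9 then map vconj S5 else if k = 10 then map vconj S6 else [])"

definition Lam :: "nat \<Rightarrow> (complex ^ 4) set" where
  "Lam k = espan (Sset k)"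

definition E8 :: "(real ^ 8) set" where
  "E8 = {x. ((\<forall>i. x $ i \<in> \<int>) \<or> (\<forall>i. x $ i - 1/2 \<in> \<int>)) \<and>
            (\<exists>k::int. (\<Sum>i\<in>UNIV. x $ i) = 2 * of_int k)}"

text \<open>C^4 is regarded as the real 8-dimensional Euclidean space (its real inner product
  is Re of the Hermitian product). L is a copy of E8: a real-linear similarity maps L onto E8.\<close>
definition is_E8_copy :: "(complex ^ 4) set \<Rightarrow> bool" where
  "is_E8_copy L \<longleftrightarrow> (\<exists>(f :: complex ^ 4 \<Rightarrow> real ^ 8) (c::real). linear f \<and> c > 0 \<and>
      (\<forall>x y. inner (f x) (f y) = c * inner x y) \<and> f ` L = E8)"

end

theory Submission
  imports Defs
begin

(* Each of the four generators g_j of the claimed lattice is an explicit E-combination of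
   each S_k, k <= 6; since complex conjugation fixes E and the span of the g_j, the same holds
   for the conjugate sets. Conversely, a vector with coordinates e in S_1 and c in S_2 has the
   E-coordinates (-c_2, theta e_4 - c_1, e_3 + e_4, e_4) in the g_j. Finally, an explicit
   real-linear map multiplying inner products by 2/9 sends the Z-basis g_j, omega g_j of this
   lattice to a Z-basis of E8. *)

lemma vector4_nth [simp]:
  "(vector [a, b, c, d] :: 'a::zero^4) $ 1 = a"
  "(vector [a, b, c, d] :: 'a::zero^4) $ 2 = b"
  "(vector [a, b, c, d] :: 'a::zero^4) $ 3 = c"
  "(vector [a, b, c, d] :: 'a::zero^4) $ 4 = d"
  unfolding vector_def by simp_all

lemma omega_Re [simp]: "Re omega = -1/2" and omega_Im [simp]: "Im omega = sqrt 3 / 2"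
  by (simp_all add: omega_def cos_120 sin_120)

lemma omega_times_omega: "omega * omega = -1 - omega"
  by (simp add: complex_eq_iff)

lemma omega_times_omega_times: "omega * (omega * z) = - z - omega * z"
  by (metis omega_times_omega mult.assoc mult_minus_left left_diff_distrib mult_1)

lemma cnj_omega: "cnj omega = -1 - omega"
  by (simp add: complex_eq_iff)

lemma theta_eq: "theta = 1 + 2 * omega"
  by (simp add: theta_def cnj_omega)

lemma theta_times_theta: "theta * theta = -3"
  unfolding theta_eq using omega_times_omega by algebra

lemma cnj_theta: "cnj theta = - theta"
  by (simp add: theta_def)

lemma eisenstein_iff: "z \<in> eisenstein \<longleftrightarrow> (\<exists>a b. z = of_int a + of_int b * omega)"
  by (simp add: eisenstein_def)

lemma eisensteinI: "of_int a + of_int b * omega \<in> eisenstein"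
  unfolding eisenstein_iff by blast

lemma eisensteinE:
  assumes "z \<in> eisenstein"
  obtains a b where "z = of_int a + of_int b * omega"
  using assms unfolding eisenstein_iff by blast

lemma eisenstein_add [simp]: "x \<in> eisenstein \<Longrightarrow> y \<in> eisenstein \<Longrightarrow> x + y \<in> eisenstein"
proof (elim eisensteinE)
  fix a b c d assume "x = of_int a + of_int b * omega" "y = of_int c + of_int d * omega"
  then have "x + y = of_int (a + c) + of_int (b + d) * omega"
    by (simp add: algebra_simps)
  then show ?thesis by (simp only: eisensteinI)
qed

lemma eisenstein_mult [simp]: "x \<in> eisenstein \<Longrightarrow> y \<in> eisenstein \<Longrightarrow> x * y \<in> eisenstein"
proof (elim eisensteinE)
  fix a b c d assume "x = of_int a + of_int b * omega" "y = of_int c + of_int d * omega"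
  then have "x * y = of_int (a * c - b * d) + of_int (a * d + b * c - b * d) * omega"
    using omega_times_omega by (simp add: algebra_simps) algebra
  then show ?thesis by (simp only: eisensteinI)
qed

lemma eisenstein_uminus [simp]: "x \<in> eisenstein \<Longrightarrow> - x \<in> eisenstein"
proof (elim eisensteinE)
  fix a b assume "x = of_int a + of_int b * omega"
  then have "- x = of_int (- a) + of_int (- b) * omega" by simp
  then show ?thesis by (simp only: eisensteinI)
qed

lemma eisenstein_cnj [simp]: "x \<in> eisenstein \<Longrightarrow> cnj x \<in> eisenstein"
proof (elim eisensteinE)
  fix a b assume "x = of_int a + of_int b * omega"
  then have "cnj x = of_int (a - b) + of_int (- b) * omega"
    by (simp add: cnj_omega algebra_simps)
  then show ?thesis by (simp only: eisensteinI)
qed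

lemma eisenstein_diff [simp]: "x \<in> eisenstein \<Longrightarrow> y \<in> eisenstein \<Longrightarrow> x - y \<in> eisenstein"
  using eisenstein_add[of x "- y"] by simp

lemma eisenstein_of_int [simp]: "of_int a \<in> eisenstein"
  using eisensteinI[of a 0] by simp

lemma eisenstein_0 [simp]: "0 \<in> eisenstein"
  and eisenstein_1 [simp]: "1 \<in> eisenstein"
  and eisenstein_omega [simp]: "omega \<in> eisenstein"
  and eisenstein_theta [simp]: "theta \<in> eisenstein"
  using eisenstein_of_int[of 0] eisenstein_of_int[of 1] eisensteinI[of 0 1] eisensteinI[of 1 2]
  by (simp_all add: theta_eq)

lemma of_real_Ints_in_eisenstein: "a \<in> \<int> \<Longrightarrow> b \<in> \<int> \<Longrightarrow> of_real a + of_real b * omega \<in> eisenstein"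
  by (elim Ints_cases) (simp add: eisensteinI)

lemma zero_in_espan: "0 \<in> espan S"
  unfolding espan_def by (rule CollectI, rule exI[of _ "\<lambda>_. 0"]) simp

lemma espan_add:
  assumes "x \<in> espan S" "y \<in> espan S"
  shows "x + y \<in> espan S"
proof -
  obtain c d where "\<forall>i<length S. c i \<in> eisenstein" "x = (\<Sum>i<length S. c i *s S ! i)"
    "\<forall>i<length S. d i \<in> eisenstein" "y = (\<Sum>i<length S. d i *s S ! i)"
    using assms unfolding espan_def by blast
  then show ?thesis
    unfolding espan_def
    by (auto intro!: exI[of _ "\<lambda>i. c i + d i"] simp: vec_eq_iff sum_component sum.distrib algebra_simps)
qed

lemma espan_scale:
  assumes "a \<in> eisenstein" "x \<in> espan S"
  shows "a *s x \<in> espan S"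
proof -
  obtain c where "\<forall>i<length S. c i \<in> eisenstein" "x = (\<Sum>i<length S. c i *s S ! i)"
    using assms(2) unfolding espan_def by blast
  then show ?thesis
    unfolding espan_def using assms(1)
    by (auto intro!: exI[of _ "\<lambda>i. a * c i"] simp: vec_eq_iff sum_component sum_distrib_left mult.assoc)
qed

lemma espan_sum: "(\<And>i. i \<in> A \<Longrightarrow> f i \<in> espan S) \<Longrightarrow> sum f A \<in> espan S"
  by (induction A rule: infinite_finite_induct) (auto intro: zero_in_espan espan_add)

lemma espan_subsetI:
  assumes "\<And>v. v \<in> set T \<Longrightarrow> v \<in> espan S"
  shows "espan T \<subseteq> espan S"
proof
  fix x assume "x \<in> espan T"
  then obtain c where c: "\<forall>i<length T. c i \<in> eisenstein" "x = (\<Sum>i<length T. c i *s T ! i)"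
    unfolding espan_def by blast
  have "c i *s T ! i \<in> espan S" if "i < length T" for i
    using that c(1) assms[OF nth_mem[OF that]] by (simp add: espan_scale)
  then show "x \<in> espan S"
    unfolding c(2) by (auto intro: espan_sum)
qed

definition lincomb :: "complex list \<Rightarrow> (complex ^ 4) list \<Rightarrow> complex ^ 4" where
  "lincomb c S = (\<Sum>i<length S. c ! i *s S ! i)"

lemma lincomb4 [simp]:
  "lincomb [c1, c2, c3, c4] [v1, v2, v3, v4] = c1 *s v1 + c2 *s v2 + c3 *s v3 + c4 *s v4"
  by (simp add: lincomb_def eval_nat_numeral)

lemma lincomb_in_espan: "length c = length S \<Longrightarrow> set c \<subseteq> eisenstein \<Longrightarrow> lincomb c S \<in> espan S"
  unfolding espan_def lincomb_def by (auto intro!: exI[of _ "nth c"])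

lemma espan4E:
  assumes "x \<in> espan [v1, v2, v3, v4]"
  obtains c1 c2 c3 c4 where "c1 \<in> eisenstein" "c2 \<in> eisenstein" "c3 \<in> eisenstein" "c4 \<in> eisenstein"
    "x = c1 *s v1 + c2 *s v2 + c3 *s v3 + c4 *s v4"
proof -
  obtain c where "\<forall>i<length [v1, v2, v3, v4]. c i \<in> eisenstein"
    "x = (\<Sum>i<length [v1, v2, v3, v4]. c i *s [v1, v2, v3, v4] ! i)"
    using assms unfolding espan_def by blast
  then show thesis
    by (intro that[of "c 0" "c 1" "c 2" "c 3"]) (simp_all add: eval_nat_numeral)
qed

lemma vconj_in_espan_map_vconj:
  assumes "x \<in> espan S"
  shows "vconj x \<in> espan (map vconj S)"
proof -
  obtain c where "\<forall>i<length S. c i \<in> eisenstein" "x = (\<Sum>i<length S. c i *s S ! i)"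
    using assms unfolding espan_def by blast
  then show ?thesis
    unfolding espan_def
    by (auto intro!: exI[of _ "\<lambda>i. cnj (c i)"] simp: vconj_def vec_eq_iff sum_component)
qed

lemma espan_subset_if_lincombs:
  assumes "T = map (\<lambda>c. lincomb c S) C"
    and "\<And>c. c \<in> set C \<Longrightarrow> length c = length S \<and> set c \<subseteq> eisenstein"
  shows "espan T \<subseteq> espan S"
proof (rule espan_subsetI)
  fix v assume "v \<in> set T"
  then obtain c where "c \<in> set C" "v = lincomb c S" using assms(1) by auto
  then show "v \<in> espan S" using assms(2) lincomb_in_espan by blast
qed

lemma vconj_vconj [simp]: "vconj (vconj x) = x"
  by (simp add: vconj_def vec_eq_iff)

lemma espan_subset_espan_map_vconj:
  assumes "\<And>x. x \<in> espan T \<Longrightarrow> vconj x \<in> espan T" and "espan T \<subseteq> espan S"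
  shows "espan T \<subseteq> espan (map vconj S)"
proof
  fix x assume "x \<in> espan T"
  then have "vconj x \<in> espan S" using assms by blast
  then show "x \<in> espan (map vconj S)" using vconj_in_espan_map_vconj by fastforce
qed

definition E8_gens :: "(complex ^ 4) list" where
  "E8_gens = [theta *s vector [theta, 0, 0, 0], theta *s vector [0, theta, 0, 0],
              theta *s vector [1, 1, 1, 0], theta *s vector [0, 1, -1, 1]]"

lemmas lincomb_simps = vec_eq_iff forall_4 vconj_def cnj_omega cnj_theta theta_eq
  algebra_simps omega_times_omega omega_times_omega_times

lemma vconj_espan_E8_gens:
  assumes "x \<in> espan E8_gens"
  shows "vconj x \<in> espan E8_gens"
proof -
  have "espan (map vconj E8_gens) \<subseteq> espan E8_gens"
    by (rule espan_subset_if_lincombs[where C = "[[1, 0, 0, 0], [0, 1, 0, 0], [0, 0, -1, 0], [0, 0, 0, -1]]"])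
      (auto simp: E8_gens_def lincomb_simps)
  then show ?thesis using vconj_in_espan_map_vconj[OF assms] by blast
qed

lemma espan_E8_gens_subset_Lam_1_to_6:
  assumes "k \<in> {1..6}"
  shows "espan E8_gens \<subseteq> Lam k"
proof -
  have "espan E8_gens \<subseteq> espan S1"
    unfolding S1_def
    by (rule espan_subset_if_lincombs[where C = "[[theta, 0, 0, 0], [0, theta, 0, 0],
          [1, 1, 1, 0], [0, 1, -1, 1]]"],
          simp add: E8_gens_def lincomb_simps) auto
  moreover have "espan E8_gens \<subseteq> espan S2"
    unfolding S2_def
    by (rule espan_subset_if_lincombs[where C = "[[0, -1, -1, -1], [-1, 0, 1, -1],
          [0, 0, 0, theta], [theta, 0, 0, 0]]"],
          simp add: E8_gens_def lincomb_simps) auto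
  moreover have "espan E8_gens \<subseteq> espan S3"
    unfolding S3_def
    by (rule espan_subset_if_lincombs[where C = "[[0, -1, -1, -1], [-1, 0, -1 - omega, 1 + omega],
          [0, omega, omega, 1], [1 + omega, 1, -1, 0]]"],
          simp add: E8_gens_def lincomb_simps) auto
  moreover have "espan E8_gens \<subseteq> espan S4"
    unfolding S4_def
    by (rule espan_subset_if_lincombs[where C = "[[0, -1, -1, -1], [-1, 0, 1, -1],
          [omega, omega, 0, 1 + omega], [1, 0, -omega, omega]]"],
          simp add: E8_gens_def lincomb_simps) auto
  moreover have "espan E8_gens \<subseteq> espan S5"
    unfolding S5_def
    by (rule espan_subset_if_lincombs[where C = "[[0, -1, -1, -1], [-1, 0, -1 - omega, 1 + omega],
          [omega, 1 + omega, omega, 0], [0, -1 - omega, omega, 1]]"],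
          simp add: E8_gens_def lincomb_simps) auto
  moreover have "espan E8_gens \<subseteq> espan S6"
    unfolding S6_def
    by (rule espan_subset_if_lincombs[where C = "[[0, -1, -1, -1], [-1, 0, omega, -omega],
          [omega, 0, 1 + omega, omega], [1 + omega, 1 + omega, 0, -1 - omega]]"],
          simp add: E8_gens_def lincomb_simps) auto
  moreover have "k = 1 \<or> k = 2 \<or> k = 3 \<or> k = 4 \<or> k = 5 \<or> k = 6"
    using assms by auto
  ultimately show ?thesis by (auto simp: Lam_def Sset_def)
qed

lemma espan_E8_gens_subset_Lam:
  assumes "k \<in> {1..10}"
  shows "espan E8_gens \<subseteq> Lam k"
proof (cases "k \<le> 6")
  case True
  then show ?thesis using assms espan_E8_gens_subset_Lam_1_to_6 by simp
next
  case False
  then have "Lam k = espan (map vconj (Sset (k - 4)))" and "k - 4 \<in> {1..6}"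
    using assms by (auto simp: Lam_def Sset_def)
  then show ?thesis
    using espan_subset_espan_map_vconj vconj_espan_E8_gens espan_E8_gens_subset_Lam_1_to_6
    by (simp add: Lam_def)
qed

lemma espan_S1_Int_espan_S2_subset: "espan S1 \<inter> espan S2 \<subseteq> espan E8_gens"
proof
  fix x assume x: "x \<in> espan S1 \<inter> espan S2"
  obtain e1 e2 e3 e4
    where e: "e1 \<in> eisenstein" "e2 \<in> eisenstein" "e3 \<in> eisenstein" "e4 \<in> eisenstein"
      and x_S1: "x = e1 *s vector [theta, 0, 0, 0] + e2 *s vector [0, theta, 0, 0]
                   + e3 *s vector [0, 0, theta, 0] + e4 *s vector [0, 0, 0, theta]"
    using x unfolding S1_def by (blast elim: espan4E)
  obtain c1 c2 c3 c4
    where c: "c1 \<in> eisenstein" "c2 \<in> eisenstein" "c3 \<in> eisenstein" "c4 \<in> eisenstein"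
      and x_S2: "x = c1 *s vector [0, 1, -1, 1] + c2 *s vector [1, 0, -1, -1]
                   + c3 *s vector [1, -1, 0, 1] + c4 *s vector [1, 1, 1, 0]"
    using x unfolding S2_def by (blast elim: espan4E)
  have "e1 * theta = c2 + c3 + c4" "e2 * theta = c1 - c3 + c4"
    "e3 * theta = - c1 - c2 + c4" "e4 * theta = c1 - c2 + c3"
    using trans[OF x_S1[symmetric] x_S2] unfolding vec_eq_iff forall_4
    by (simp_all add: algebra_simps)
  then have "x = lincomb [- c2, theta * e4 - c1, e3 + e4, e4] E8_gens"
    unfolding x_S1 E8_gens_def lincomb4 vec_eq_iff forall_4
    by (simp, intro conjI; use theta_times_theta in algebra)
  moreover have "lincomb [- c2, theta * e4 - c1, e3 + e4, e4] E8_gens \<in> espan E8_gens"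
    by (rule lincomb_in_espan) (use e c in \<open>simp_all add: E8_gens_def\<close>)
  ultimately show "x \<in> espan E8_gens" by simp
qed

lemma exhaust_8:
  fixes i :: 8
  shows "i = 1 \<or> i = 2 \<or> i = 3 \<or> i = 4 \<or> i = 5 \<or> i = 6 \<or> i = 7 \<or> i = 8"
proof (induct i)
  case (of_int z)
  then have "z = 0 \<or> z = 1 \<or> z = 2 \<or> z = 3 \<or> z = 4 \<or> z = 5 \<or> z = 6 \<or> z = 7" by fastforce
  then show ?case by auto
qed

lemma forall_8: "(\<forall>i::8. P i) \<longleftrightarrow> P 1 \<and> P 2 \<and> P 3 \<and> P 4 \<and> P 5 \<and> P 6 \<and> P 7 \<and> P 8"
  by (metis exhaust_8)

lemma UNIV_8: "UNIV = {1, 2, 3, 4, 5, 6, 7, 8::8}"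
  using exhaust_8 by auto

lemma sum_8: "sum f (UNIV::8 set) = f 1 + f 2 + f 3 + f 4 + f 5 + f 6 + f 7 + f 8"
  unfolding UNIV_8 by (simp add: ac_simps)

lemma vector8_nth [simp]:
  "(vector [a1, a2, a3, a4, a5, a6, a7, a8] :: 'a::zero^8) $ 1 = a1"
  "(vector [a1, a2, a3, a4, a5, a6, a7, a8] :: 'a::zero^8) $ 2 = a2"
  "(vector [a1, a2, a3, a4, a5, a6, a7, a8] :: 'a::zero^8) $ 3 = a3"
  "(vector [a1, a2, a3, a4, a5, a6, a7, a8] :: 'a::zero^8) $ 4 = a4"
  "(vector [a1, a2, a3, a4, a5, a6, a7, a8] :: 'a::zero^8) $ 5 = a5"
  "(vector [a1, a2, a3, a4, a5, a6, a7, a8] :: 'a::zero^8) $ 6 = a6"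
  "(vector [a1, a2, a3, a4, a5, a6, a7, a8] :: 'a::zero^8) $ 7 = a7"
  "(vector [a1, a2, a3, a4, a5, a6, a7, a8] :: 'a::zero^8) $ 8 = a8"
  unfolding vector_def by simp_all

lemma sum_lessThan_8: "(\<Sum>j<(8::nat). f j) = f 0 + f 1 + f 2 + f 3 + f 4 + f 5 + f 6 + f 7"
  by (simp add: eval_nat_numeral)

lemma E8_iff:
  "x \<in> E8 \<longleftrightarrow> (\<exists>t\<in>{0, 1/2}. \<forall>i. x $ i - t \<in> \<int>) \<and> (\<exists>k::int. (\<Sum>i\<in>UNIV. x $ i) = 2 * of_int k)"
  by (auto simp: E8_def)

lemma E8_add:
  assumes "x \<in> E8" "y \<in> E8"
  shows "x + y \<in> E8"
proof -
  obtain t k where t: "t \<in> {0, 1/2}" "\<forall>i. x $ i - t \<in> \<int>" "(\<Sum>i\<in>UNIV. x $ i) = 2 * of_int k"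
    using assms(1) unfolding E8_iff by blast
  obtain s l where s: "s \<in> {0, 1/2}" "\<forall>i. y $ i - s \<in> \<int>" "(\<Sum>i\<in>UNIV. y $ i) = 2 * of_int l"
    using assms(2) unfolding E8_iff by blast
  define u :: real where "u = (if t + s = 1 then 0 else t + s)"
  have u: "u \<in> {0, 1/2}" "t + s - u \<in> \<int>"
    using t(1) s(1) by (auto simp: u_def)
  have "(x + y) $ i - u = (x $ i - t) + (y $ i - s) + (t + s - u)" for i
    by simp
  then have "\<forall>i. (x + y) $ i - u \<in> \<int>"
    using t(2) s(2) u(2) by (metis Ints_add)
  moreover have "(\<Sum>i\<in>UNIV. (x + y) $ i) = 2 * of_int (k + l)"
    using t(3) s(3) by (simp add: sum.distrib)
  ultimately show ?thesis
    unfolding E8_iff using u(1) by blast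
qed

lemma E8_uminus:
  assumes "x \<in> E8"
  shows "- x \<in> E8"
proof -
  obtain t k where t: "t \<in> {0, 1/2}" "\<forall>i. x $ i - t \<in> \<int>" "(\<Sum>i\<in>UNIV. x $ i) = 2 * of_int k"
    using assms unfolding E8_iff by blast
  have "2 * t \<in> \<int>" using t(1) by (auto simp: mult.commute[of 2])
  moreover have "(- x) $ i - t = - (x $ i - t) - 2 * t" for i
    by simp
  ultimately have "\<forall>i. (- x) $ i - t \<in> \<int>"
    using t(2) by (metis Ints_minus Ints_diff)
  moreover have "(\<Sum>i\<in>UNIV. (- x) $ i) = 2 * of_int (- k)"
    using t(3) by (simp add: sum_negf)
  ultimately show ?thesis
    unfolding E8_iff using t(1) by blast
qed

lemma zero_in_E8: "0 \<in> E8"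
  unfolding E8_def by (auto intro: exI[of _ 0])

lemma E8_scaleR_Ints:
  assumes "c \<in> \<int>" "x \<in> E8"
  shows "c *\<^sub>R x \<in> E8"
proof -
  have nat: "of_nat m *\<^sub>R x \<in> E8" for m
    by (induction m) (simp_all add: zero_in_E8 E8_add assms(2) algebra_simps)
  obtain n where "c = of_int n" using assms(1) by (rule Ints_cases)
  then show ?thesis
    using nat[of "nat n"] E8_uminus[OF nat[of "nat (- n)"]]
    by (cases "n \<ge> 0") simp_all
qed

lemma E8_sum: "(\<And>i. i \<in> A \<Longrightarrow> f i \<in> E8) \<Longrightarrow> sum f A \<in> E8"
  by (induction A rule: infinite_finite_induct) (auto intro: zero_in_E8 E8_add)

lemma E8_coord_add_diff_Ints:
  assumes "x \<in> E8"
  shows "x $ i + x $ j \<in> \<int>" and "x $ i - x $ j \<in> \<int>"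
proof -
  obtain t where t: "t \<in> {0, 1/2}" "\<forall>i. x $ i - t \<in> \<int>"
    using assms unfolding E8_iff by blast
  have "2 * t \<in> \<int>" using t(1) by (auto simp: mult.commute[of 2])
  moreover have "x $ i + x $ j = (x $ i - t) + (x $ j - t) + 2 * t"
    and "x $ i - x $ j = (x $ i - t) - (x $ j - t)" by simp_all
  ultimately show "x $ i + x $ j \<in> \<int>" and "x $ i - x $ j \<in> \<int>"
    using t(2) by (metis Ints_add, metis Ints_diff)
qed

definition int_span :: "'a::real_vector list \<Rightarrow> 'a set" where
  "int_span W = {\<Sum>j<length W. c j *\<^sub>R W ! j | c. \<forall>j<length W. c j \<in> \<int>}"

lemma int_span_subset_E8:
  assumes "set W \<subseteq> E8"
  shows "int_span W \<subseteq> E8"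
  using assms unfolding int_span_def by (auto intro!: E8_sum E8_scaleR_Ints)

definition E8_basis :: "(real ^ 8) list" where
  "E8_basis = [vector [-1, 1, 0, 0, 0, 0, 0, 0], vector [0, 0, 1, 0, 0, 1, 0, 0],
               vector [1/2, 1/2, 1/2, -1/2, -1/2, -1/2, -1/2, 1/2], vector [0, 0, 0, -1, 0, 0, 1, 0],
               vector [0, -1, 0, 0, 1, 0, 0, 0], vector [0, 0, -1, 1, 0, 0, 0, 0],
               vector [-1, 0, 0, 0, 0, 1, 0, 0], vector [0, 0, 1, 1, 0, 0, 0, 0]]"

lemma E8_basis_in_E8: "set E8_basis \<subseteq> E8"
  by (auto simp: E8_basis_def E8_def forall_8 sum_8)

lemma E8_subset_int_span: "E8 \<subseteq> int_span E8_basis"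
proof
  fix y assume y: "y \<in> E8"
  then obtain k :: int where k: "(\<Sum>i\<in>UNIV. y $ i) = 2 * of_int k"
    unfolding E8_def by blast
  define c where "c = nth [y$2 + y$5, (y$1 + y$2) + (y$5 + y$6), y$8 + y$8, y$7 + y$8, y$5 + y$8,
    of_int k + (y$8 - y$3), (y$8 - y$5) - (y$1 + y$2), of_int k - (y$1 + y$2) - (y$5 + y$6)]"
  have "\<forall>j<8. c j \<in> \<int>"
    using E8_coord_add_diff_Ints[OF y] E8_coord_add_diff_Ints(1)[OF y, of 8 8]
    by (auto simp: c_def less_Suc_eq eval_nat_numeral intro!: Ints_add Ints_diff)
  moreover have "y = (\<Sum>j<8. c j *\<^sub>R E8_basis ! j)"
    using k unfolding vec_eq_iff forall_8
    by (simp add: c_def E8_basis_def sum_8 eval_nat_numeral)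
  moreover have "length E8_basis = 8"
    by (simp add: E8_basis_def)
  ultimately show "y \<in> int_span E8_basis"
    unfolding int_span_def by auto
qed

lemma E8_eq_int_span: "E8 = int_span E8_basis"
  using E8_subset_int_span int_span_subset_E8[OF E8_basis_in_E8] by (rule antisym)

definition coord_1 :: "complex \<Rightarrow> real" where
  "coord_1 z = Re z + Im z / sqrt 3"

definition coord_omega :: "complex \<Rightarrow> real" where
  "coord_omega z = 2 * Im z / sqrt 3"

lemma coord_1_omega [simp]:
  "coord_1 (of_real a + of_real b * omega) = a"
  "coord_omega (of_real a + of_real b * omega) = b"
  by (simp_all add: coord_1_def coord_omega_def field_simps)

lemma inner_complex_coords:
  "inner z w = coord_1 z * coord_1 w + coord_omega z * coord_omega w
     - (coord_1 z * coord_omega w + coord_omega z * coord_1 w) / 2"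
proof -
  have "sqrt 3 * sqrt 3 = (3::real)" by simp
  then show ?thesis
    unfolding coord_1_def coord_omega_def inner_complex_def by (simp add: field_simps)
qed

lemma linear_coord_1: "linear coord_1" and linear_coord_omega: "linear coord_omega"
  by (auto intro!: linearI simp: coord_1_def coord_omega_def field_simps)

definition to_E8 :: "complex ^ 4 \<Rightarrow> real ^ 8" where
  "to_E8 x = (let a = (\<lambda>i. coord_1 (x $ i)); b = (\<lambda>i. coord_omega (x $ i)) in
     (1/6) *\<^sub>R vector [2 * a 1 + a 3 + a 4, 2 * b 1 - 2 * a 1 + a 3 + a 4,
                     2 * b 2 - 2 * a 2 + a 3 - a 4, a 3 - 2 * b 2 - a 4,
                     a 3 + a 4 - 2 * b 1, a 4 - 2 * a 2 - a 3,
                     a 3 - 2 * b 3 - a 4 + 2 * b 4, 2 * b 3 - a 3 - a 4 + 2 * b 4])"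

lemma linear_to_E8: "linear to_E8"
  using linear_coord_1 linear_coord_omega
  by (intro linearI) (simp_all add: to_E8_def Let_def linear_add linear_scale vec_eq_iff forall_8 algebra_simps)

lemma inner_to_E8: "inner (to_E8 x) (to_E8 y) = 2/9 * inner x y"
  by (simp add: to_E8_def Let_def inner_vec_def sum_8 sum_4 inner_complex_coords field_simps)

definition E8_gens_zcomb :: "(nat \<Rightarrow> real) \<Rightarrow> complex ^ 4" where
  "E8_gens_zcomb c = lincomb [of_real (c 0) + of_real (c 4) * omega, of_real (c 1) + of_real (c 5) * omega,
      of_real (c 2) + of_real (c 6) * omega, of_real (c 3) + of_real (c 7) * omega] E8_gens"

lemma espan_E8_gens_eq_zcombs: "espan E8_gens = E8_gens_zcomb ` {c. \<forall>j<8. c j \<in> \<int>}"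
proof
  show "espan E8_gens \<subseteq> E8_gens_zcomb ` {c. \<forall>j<8. c j \<in> \<int>}"
  proof
    fix x assume "x \<in> espan E8_gens"
    then obtain d1 d2 d3 d4 where d: "d1 \<in> eisenstein" "d2 \<in> eisenstein" "d3 \<in> eisenstein" "d4 \<in> eisenstein"
      and "x = lincomb [d1, d2, d3, d4] E8_gens"
      unfolding E8_gens_def by (auto elim: espan4E)
    moreover obtain a1 b1 a2 b2 a3 b3 a4 b4 where "d1 = of_int a1 + of_int b1 * omega"
      "d2 = of_int a2 + of_int b2 * omega" "d3 = of_int a3 + of_int b3 * omega"
      "d4 = of_int a4 + of_int b4 * omega"
      using d by (elim eisensteinE)
    moreover define c where "c = nth (map real_of_int [a1, a2, a3, a4, b1, b2, b3, b4])"
    ultimately have "x = E8_gens_zcomb c"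
      by (simp add: E8_gens_zcomb_def c_def)
    moreover have "\<forall>j<8. c j \<in> \<int>"
      by (auto simp: c_def less_Suc_eq eval_nat_numeral)
    ultimately show "x \<in> E8_gens_zcomb ` {c. \<forall>j<8. c j \<in> \<int>}" by blast
  qed
  show "E8_gens_zcomb ` {c. \<forall>j<8. c j \<in> \<int>} \<subseteq> espan E8_gens"
  proof (rule image_subsetI)
    fix c :: "nat \<Rightarrow> real" assume "c \<in> {c. \<forall>j<8. c j \<in> \<int>}"
    then show "E8_gens_zcomb c \<in> espan E8_gens"
      unfolding E8_gens_zcomb_def
      by (intro lincomb_in_espan) (auto simp: E8_gens_def intro!: of_real_Ints_in_eisenstein)
  qed
qed

lemma to_E8_E8_gens_zcomb: "to_E8 (E8_gens_zcomb c) = (\<Sum>j<8. c j *\<^sub>R E8_basis ! j)"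
proof -
  have comb: "E8_gens_zcomb c = vector
     [of_real (c 2 - 3 * c 0 - 2 * c 6) + of_real (2 * c 2 - c 6 - 3 * c 4) * omega,
      of_real (c 2 - 2 * c 6 + c 3 - 2 * c 7 - 3 * c 1) + of_real (2 * c 2 - c 6 + 2 * c 3 - c 7 - 3 * c 5) * omega,
      of_real (c 2 - 2 * c 6 - c 3 + 2 * c 7) + of_real (2 * c 2 - c 6 - 2 * c 3 + c 7) * omega,
      of_real (c 3 - 2 * c 7) + of_real (2 * c 3 - c 7) * omega]"
    by (simp add: E8_gens_zcomb_def E8_gens_def lincomb_simps)
  show ?thesis
    unfolding comb to_E8_def Let_def vector4_nth coord_1_omega
    by (simp add: E8_basis_def sum_lessThan_8 vec_eq_iff forall_8 algebra_simps)
qed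

lemma to_E8_image: "to_E8 ` espan E8_gens = E8"
proof -
  have "length E8_basis = 8" by (simp add: E8_basis_def)
  then have "int_span E8_basis = (\<lambda>c. \<Sum>j<8. c j *\<^sub>R E8_basis ! j) ` {c. \<forall>j<8. c j \<in> \<int>}"
    unfolding int_span_def by auto
  then show ?thesis
    unfolding E8_eq_int_span espan_E8_gens_eq_zcombs image_image to_E8_E8_gens_zcomb by simp
qed

theorem mainTheorem5:
  shows "(\<Inter>k\<in>{1..10::nat}. Lam k) = Lam 1 \<inter> Lam 2 \<and>
         Lam 1 \<inter> Lam 2 = espan [theta *s vector [theta,0,0,0], theta *s vector [0,theta,0,0],
                                  theta *s vector [1,1,1,0], theta *s vector [0,1,-1,1]] \<and>
         is_E8_copy (Lam 1 \<inter> Lam 2)"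
proof -
  have Lam_1_Int_Lam_2: "Lam 1 \<inter> Lam 2 = espan E8_gens"
    using espan_S1_Int_espan_S2_subset espan_E8_gens_subset_Lam[of 1] espan_E8_gens_subset_Lam[of 2]
    by (auto simp: Lam_def Sset_def)
  moreover have "(\<Inter>k\<in>{1..10::nat}. Lam k) = Lam 1 \<inter> Lam 2"
  proof
    show "(\<Inter>k\<in>{1..10::nat}. Lam k) \<subseteq> Lam 1 \<inter> Lam 2" by auto
    show "Lam 1 \<inter> Lam 2 \<subseteq> (\<Inter>k\<in>{1..10::nat}. Lam k)"
      unfolding Lam_1_Int_Lam_2 using espan_E8_gens_subset_Lam by blast
  qed
  moreover have "is_E8_copy (espan E8_gens)"
    unfolding is_E8_copy_def using linear_to_E8 inner_to_E8 to_E8_image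
    by (intro exI[of _ to_E8] exI[of _ "2/9"]) simp
  ultimately show ?thesis
    unfolding E8_gens_def by simp
qed

end
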